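(* Let $\mathcal{M}$, $\mathcal{Z}$, $\mathcal{T}$ be finite sets with $|\mathcal{T}|\ge 2$. Let $\mathcal{F}$ be a family of hash functions from $\mathcal{M}$ to $\mathcal{Z}$, let $\mathcal{H}$ be an SU$_2$ family of hash functions from $\mathcal{Z}$ to $\mathcal{T}$, and let $\mathcal{G}:=\mathcal{H}\circ\mathcal{F}$ be their element-wise composition. Let $\epsilon'\ge 0$ and $\epsilon=\epsilon'(1-1/|\mathcal{T}|)+1/|\mathcal{T}|$. Then $\mathcal{G}$ is $\epsilon$-ASU$_2$ if and only if $\mathcal{F}$ is $\epsilon'$-AU$_2$.
   Context: Hash function families are finite families (multisets indexed by keys) of functions. Element-wise composition: $\mathcal{H}\circ\mathcal{F}$ is the family $(h\circ f)_{(h,f)\in\mathcal{H}\times\mathcal{F}}$, so $|\mathcal{G}|=|\mathcal{H}||\mathcal{F}|$, counted with multiplicity. A family $\mathcal{F}$ of functions $\mathcal{M}\to\mathcal{Z}$ is $\epsilon'$-Almost Universal$_2$ ($\epsilon'$-AU$_2$) if for any two distinct $m_1,m_2\in\mathcal{M}$, the number of $f\in\mathcal{F}$ with $f(m_1)=f(m_2)$ is at most $\epsilon'|\mathcal{F}|$. A family $\mathcal{G}$ of functions $\mathcal{M}\to\mathcal{T}$ is $\epsilon$-Almost Strongly Universal$_2$ ($\epsilon$-ASU$_2$) if (a) for every $m_1\in\mathcal{M}$ and $t_1\in\mathcal{T}$, the number of $g\in\mathcal{G}$ with $g(m_1)=t_1$ is exactly $|\mathcal{G}|/|\mathcal{T}|$;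 and (b) for all distinct $m_1,m_2\in\mathcal{M}$ and all $t_1,t_2\in\mathcal{T}$ (possibly equal), among those $g$ with $g(m_1)=t_1$, the fraction that also satisfy $g(m_2)=t_2$ is at most $\epsilon$, i.e. $|\{g: g(m_1)=t_1, g(m_2)=t_2\}|\le \epsilon|\mathcal{G}|/|\mathcal{T}|$. The family is Strongly Universal$_2$ (SU$_2$) if it is $\epsilon$-ASU$_2$ with $\epsilon=1/|\mathcal{T}|$. *)

theory Defs
  imports Complex_Main
begin

text \<open>A hash function family is a finite set of keys K together with an indexing
  function F assigning to each key a function. Sizes are counted over keys,
  i.e. with multiplicity.\<close>

definition AU2 :: "real \<Rightarrow> 'k set \<Rightarrow> ('k \<Rightarrow> 'm \<Rightarrow> 'z) \<Rightarrow> bool" where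
  "AU2 eps K F \<longleftrightarrow>
     (\<forall>m1 m2. m1 \<noteq> m2 \<longrightarrow> real (card {k\<in>K. F k m1 = F k m2}) \<le> eps * real (card K))"

definition ASU2 :: "real \<Rightarrow> 'k set \<Rightarrow> ('k \<Rightarrow> 'm \<Rightarrow> 't::finite) \<Rightarrow> bool" where
  "ASU2 eps K G \<longleftrightarrow>
     (\<forall>m1 t1. real (card {k\<in>K. G k m1 = t1}) = real (card K) / real (card (UNIV :: 't set))) \<and>
     (\<forall>m1 m2 t1 t2. m1 \<noteq> m2 \<longrightarrow>
        real (card {k\<in>K. G k m1 = t1 \<and> G k m2 = t2}) \<le> eps * real (card K) / real (card (UNIV :: 't set)))"

definition SU2 :: "'k set \<Rightarrow> ('k \<Rightarrow> 'm \<Rightarrow> 't::finite) \<Rightarrow> bool" where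
  "SU2 K G \<longleftrightarrow> ASU2 (1 / real (card (UNIV :: 't set))) K G"

definition comp_keys :: "'a set \<Rightarrow> 'b set \<Rightarrow> ('a \<times> 'b) set" where
  "comp_keys KH KF = KH \<times> KF"

definition comp_fam :: "('a \<Rightarrow> 'z \<Rightarrow> 't) \<Rightarrow> ('b \<Rightarrow> 'm \<Rightarrow> 'z) \<Rightarrow> ('a \<times> 'b \<Rightarrow> 'm \<Rightarrow> 't)" where
  "comp_fam H F = (\<lambda>(a, b). H a \<circ> F b)"

end

theory Submission
  imports Defs
begin

text \<open>
  Count key pairs (a, b) of the composed family H \<circ> F by first fixing the
  inner key b.  For fixed b, the two intermediate values F b m1, F b m2 either collide
  or not.  If they are distinct, strong universality of H makes the number of a with
  H a z1 = t1, H a z2 = t2 exactly |KH|/|T|^2 (the SU2 upper bound is forced to be an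
  equality because these counts sum to the exact marginal |KH|/|T|).  If they collide,
  the count is |KH|/|T| when t1 = t2 and 0 otherwise.  Hence the pair counts of H \<circ> F
  are an explicit affine function of the number c of colliding inner keys; the
  marginals are always uniform, off-diagonal pairs (t1 \<noteq> t2) always satisfy the
  bound, and the diagonal bound is equivalent to c \<le> eps' |KF| by a short
  computation with eps = eps' (1 - 1/|T|) + 1/|T|.
\<close>

lemma card_eq_sum_fibres:
  assumes "finite S" "finite R" "g ` S \<subseteq> R"
  shows "real (card S) = (\<Sum>y\<in>R. real (card {x\<in>S. g x = y}))"
  using sum_fun_comp[OF assms, of "\<lambda>_. (1::real)"] by simp

text \<open>In an SU2 family the pair counts for distinct inputs are not only bounded by
  |K|/|T|^2 but equal to it: they sum to the exact marginal count |K|/|T|.\<close>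
lemma SU2_pair_count:
  fixes H :: "'k \<Rightarrow> 'z \<Rightarrow> 't::finite"
  assumes su: "SU2 K H" and fin: "finite K" and ne: "z1 \<noteq> z2"
  shows "real (card {a\<in>K. H a z1 = t1 \<and> H a z2 = t2})
          = real (card K) / real (card (UNIV :: 't set)) / real (card (UNIV :: 't set))"
proof -
  let ?T = "real (card (UNIV :: 't set))"
  let ?b = "real (card K) / ?T / ?T"
  let ?f = "\<lambda>t. real (card {a\<in>K. H a z1 = t1 \<and> H a z2 = t})"
  have marginal: "real (card {a\<in>K. H a z1 = t1}) = real (card K) / ?T"
    and bound: "\<And>t. ?f t \<le> ?b"
    using su ne unfolding SU2_def ASU2_def by auto
  have "real (card {a\<in>K. H a z1 = t1})
          = (\<Sum>t\<in>UNIV. real (card {x\<in>{a\<in>K. H a z1 = t1}. H x z2 = t}))"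
    by (rule card_eq_sum_fibres) (use fin in auto)
  also have "\<dots> = (\<Sum>t\<in>UNIV. ?f t)"
    by (intro sum.cong) (auto intro!: arg_cong[where f="\<lambda>S. real (card S)"])
  finally have "(\<Sum>t\<in>UNIV. ?b - ?f t) = 0"
    using marginal by (simp add: sum_subtractf)
  then have "\<forall>t\<in>UNIV. ?b - ?f t = 0"
    using sum_nonneg_eq_0_iff[of UNIV "\<lambda>t. ?b - ?f t"] bound by simp
  then show ?thesis by simp
qed

lemma card_comp_keys:
  assumes finH: "finite KH" and finF: "finite KF"
  shows "real (card {k\<in>comp_keys KH KF. P k}) = (\<Sum>b\<in>KF. real (card {a\<in>KH. P (a, b)}))"
proof -
  have "real (card {k\<in>comp_keys KH KF. P k})
      = (\<Sum>b\<in>KF. real (card {x\<in>{k\<in>comp_keys KH KF. P k}. snd x = b}))"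
    by (rule card_eq_sum_fibres) (use finH finF in \<open>auto simp: comp_keys_def\<close>)
  also have "\<dots> = (\<Sum>b\<in>KF. real (card {a\<in>KH. P (a, b)}))"
  proof (rule sum.cong[OF refl])
    fix b assume "b \<in> KF"
    then have "{x\<in>{k\<in>comp_keys KH KF. P k}. snd x = b} = (\<lambda>a. (a, b)) ` {a\<in>KH. P (a, b)}"
      by (auto simp: comp_keys_def)
    moreover have "inj_on (\<lambda>a. (a, b)) {a\<in>KH. P (a, b)}" by (auto simp: inj_on_def)
    ultimately show "real (card {x\<in>{k\<in>comp_keys KH KF. P k}. snd x = b})
                       = real (card {a\<in>KH. P (a, b)})"
      by (simp add: card_image)
  qed
  finally show ?thesis .
qed

lemma diagonal_bound_iff:
  fixes c n N T eps eps' :: real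
  assumes T: "T > 1" and N: "N > 0" and eps: "eps = eps' * (1 - 1 / T) + 1 / T"
  shows "c * (N / T) + (n - c) * (N / T / T) \<le> eps * (N * n) / T \<longleftrightarrow> c \<le> eps' * n"
    (is "?lhs \<le> ?rhs \<longleftrightarrow> _")
proof -
  let ?p = "(N / T / T) * (T - 1)"
  have diff: "?rhs - ?lhs = ?p * (eps' * n - c)"
    using T by (simp add: eps field_simps)
  have scale: "0 \<le> ?p * x \<longleftrightarrow> 0 \<le> x" for x
    using mult_le_cancel_left_pos[of ?p 0 x] T N by simp
  have "?lhs \<le> ?rhs \<longleftrightarrow> 0 \<le> ?rhs - ?lhs" by simp
  also have "\<dots> \<longleftrightarrow> 0 \<le> eps' * n - c" unfolding diff by (rule scale)
  finally show ?thesis by simp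
qed

lemma eps_ge_inverse:
  fixes T eps eps' :: real
  assumes "T \<ge> 1" "eps' \<ge> 0" "eps = eps' * (1 - 1 / T) + 1 / T"
  shows "eps \<ge> 1 / T"
  using assms by (simp add: mult_nonneg_nonneg)

definition collisions :: "'k set \<Rightarrow> ('k \<Rightarrow> 'm \<Rightarrow> 'z) \<Rightarrow> 'm \<Rightarrow> 'm \<Rightarrow> real" where
  "collisions K F m1 m2 = real (card {b\<in>K. F b m1 = F b m2})"

locale SU2_composition =
  fixes KH :: "'kh set" and H :: "'kh \<Rightarrow> 'z \<Rightarrow> 't::finite"
    and KF :: "'kf set" and F :: "'kf \<Rightarrow> 'm \<Rightarrow> 'z"
  assumes finH: "finite KH" and finF: "finite KF" and su: "SU2 KH H"
begin

abbreviation "N \<equiv> real (card KH)"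
abbreviation "n \<equiv> real (card KF)"
abbreviation "G \<equiv> comp_fam H F"

lemma card_keys: "real (card (comp_keys KH KF)) = N * n"
  by (simp add: comp_keys_def card_cartesian_product)

lemma H_marginal: "real (card {a\<in>KH. H a z = t}) = N / real (card (UNIV :: 't set))"
  using su unfolding SU2_def ASU2_def by auto

lemma G_marginal:
  "real (card {k\<in>comp_keys KH KF. G k m = t})
     = real (card (comp_keys KH KF)) / real (card (UNIV :: 't set))"
proof -
  have "real (card {k\<in>comp_keys KH KF. G k m = t})
          = (\<Sum>b\<in>KF. real (card {a\<in>KH. H a (F b m) = t}))"
    by (subst card_comp_keys[OF finH finF]) (simp add: comp_fam_def)
  also have "\<dots> = n * (N / real (card (UNIV :: 't set)))" by (simp add: H_marginal)
  finally show ?thesis by (simp add: card_keys)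
qed

lemma H_pair_count_at:
  "real (card {a\<in>KH. H a (F b m1) = t1 \<and> H a (F b m2) = t2})
     = (if F b m1 = F b m2 then (if t1 = t2 then N / real (card (UNIV :: 't set)) else 0)
        else N / real (card (UNIV :: 't set)) / real (card (UNIV :: 't set)))"
proof (cases "F b m1 = F b m2")
  case True
  then show ?thesis using H_marginal[of "F b m2" t2] by (auto simp: card_eq_0_iff)
next
  case False
  then show ?thesis using SU2_pair_count[OF su finH False] by simp
qed

lemma G_pair_count:
  "real (card {k\<in>comp_keys KH KF. G k m1 = t1 \<and> G k m2 = t2})
     = collisions KF F m1 m2 * (if t1 = t2 then N / real (card (UNIV :: 't set)) else 0)
       + (n - collisions KF F m1 m2) * (N / real (card (UNIV :: 't set)) / real (card (UNIV :: 't set)))"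
proof -
  let ?C = "{b\<in>KF. F b m1 = F b m2}"
  have split: "card (KF \<inter> - {b. F b m1 = F b m2}) = card KF - card ?C"
    using finF by (simp add: Diff_eq[symmetric] Collect_conj_eq card_Diff_subset_Int Int_commute)
  have "real (card {k\<in>comp_keys KH KF. G k m1 = t1 \<and> G k m2 = t2})
      = (\<Sum>b\<in>KF. real (card {a\<in>KH. H a (F b m1) = t1 \<and> H a (F b m2) = t2}))"
    by (subst card_comp_keys[OF finH finF]) (simp add: comp_fam_def)
  also have "\<dots> = real (card ?C) * (if t1 = t2 then N / real (card (UNIV :: 't set)) else 0)
                  + real (card (KF \<inter> - {b. F b m1 = F b m2}))
                    * (N / real (card (UNIV :: 't set)) / real (card (UNIV :: 't set)))"
    by (simp only: H_pair_count_at sum.If_cases[OF finF])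
       (simp add: Collect_conj_eq Int_commute)
  finally show ?thesis
    using finF by (simp add: split collisions_def card_mono of_nat_diff)
qed

lemma G_diagonal_bound_iff:
  assumes T: "card (UNIV :: 't set) \<ge> 2" and ne: "KH \<noteq> {}"
    and eps: "eps = eps' * (1 - 1 / real (card (UNIV :: 't set))) + 1 / real (card (UNIV :: 't set))"
  shows "real (card {k\<in>comp_keys KH KF. G k m1 = t \<and> G k m2 = t})
           \<le> eps * real (card (comp_keys KH KF)) / real (card (UNIV :: 't set))
         \<longleftrightarrow> collisions KF F m1 m2 \<le> eps' * n"
proof -
  have "N > 0" using finH ne by (simp add: card_gt_0_iff)
  moreover have "real (card (UNIV :: 't set)) > 1" using T by simp
  ultimately show ?thesis
    using diagonal_bound_iff[OF _ _ eps, of N "collisions KF F m1 m2" n]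
    by (simp add: G_pair_count card_keys)
qed

text \<open>Off-diagonal pairs (t1 \<noteq> t2) satisfy the bound whenever eps \<ge> 1/|T|,
  whatever F is: only non-colliding inner keys contribute.\<close>
lemma G_offdiagonal_bound:
  assumes ne: "t1 \<noteq> t2" and eps: "eps \<ge> 1 / real (card (UNIV :: 't set))"
  shows "real (card {k\<in>comp_keys KH KF. G k m1 = t1 \<and> G k m2 = t2})
           \<le> eps * real (card (comp_keys KH KF)) / real (card (UNIV :: 't set))"
proof -
  have "(n - collisions KF F m1 m2) * (N / real (card (UNIV :: 't set)) / real (card (UNIV :: 't set)))
          \<le> n * (N / real (card (UNIV :: 't set)) / real (card (UNIV :: 't set)))"
    by (intro mult_right_mono) (auto simp: collisions_def)
  also have "\<dots> = (1 / real (card (UNIV :: 't set))) * (N * n) / real (card (UNIV :: 't set))"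
    by simp
  also have "\<dots> \<le> eps * (N * n) / real (card (UNIV :: 't set))"
    using eps by (intro divide_right_mono mult_right_mono) auto
  finally show ?thesis using ne by (simp add: G_pair_count card_keys)
qed

end

theorem theorem1:
  fixes KF :: "'kf set" and F :: "'kf \<Rightarrow> 'm::finite \<Rightarrow> 'z::finite"
    and KH :: "'kh set" and H :: "'kh \<Rightarrow> 'z \<Rightarrow> 't::finite"
    and eps' eps :: real
  assumes "card (UNIV :: 't set) \<ge> 2"
    and "finite KF" and "KF \<noteq> {}"
    and "finite KH" and "KH \<noteq> {}"
    and "SU2 KH H"
    and "eps' \<ge> 0"
    and "eps = eps' * (1 - 1 / real (card (UNIV :: 't set))) + 1 / real (card (UNIV :: 't set))"
  shows "ASU2 eps (comp_keys KH KF) (comp_fam H F) \<longleftrightarrow> AU2 eps' KF F"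
proof -
  interpret SU2_composition KH H KF F using assms by unfold_locales
  have eps_ge: "eps \<ge> 1 / real (card (UNIV :: 't set))"
    by (rule eps_ge_inverse[OF _ assms(7,8)]) (simp add: finite_UNIV_card_ge_0 Suc_le_eq)
  have "ASU2 eps (comp_keys KH KF) (comp_fam H F) \<longleftrightarrow>
        (\<forall>m1 m2 t1 t2. m1 \<noteq> m2 \<longrightarrow>
           real (card {k\<in>comp_keys KH KF. comp_fam H F k m1 = t1 \<and> comp_fam H F k m2 = t2})
             \<le> eps * real (card (comp_keys KH KF)) / real (card (UNIV :: 't set)))"
    (is "_ \<longleftrightarrow> (\<forall>m1 m2 t1 t2. m1 \<noteq> m2 \<longrightarrow> ?bound m1 m2 t1 t2)")
    unfolding ASU2_def using G_marginal by simp
  also have "\<dots> \<longleftrightarrow> (\<forall>m1 m2. m1 \<noteq> m2 \<longrightarrow> collisions KF F m1 m2 \<le> eps' * n)"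
  proof (intro iffI allI impI)
    fix m1 m2 :: 'm
    assume "\<forall>m1 m2 t1 t2. m1 \<noteq> m2 \<longrightarrow> ?bound m1 m2 t1 t2" and "m1 \<noteq> m2"
    then show "collisions KF F m1 m2 \<le> eps' * n"
      using G_diagonal_bound_iff[OF assms(1,5,8), of m1 undefined m2] by blast
  next
    fix m1 m2 :: 'm and t1 t2 :: 't
    assume "\<forall>m1 m2. m1 \<noteq> m2 \<longrightarrow> collisions KF F m1 m2 \<le> eps' * n" and "m1 \<noteq> m2"
    then show "?bound m1 m2 t1 t2"
      using G_diagonal_bound_iff[OF assms(1,5,8)] G_offdiagonal_bound[OF _ eps_ge]
      by (cases "t1 = t2") auto
  qed
  also have "\<dots> \<longleftrightarrow> AU2 eps' KF F"
    unfolding AU2_def collisions_def ..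
  finally show ?thesis .
qed

end
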